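(* Let $G$ be a bipartite graph with colour classes $V$ and $W$, where $\#V=v$ and $\#W=w$, containing no cycle of length $4$ and no cycle of length $6$. Then its number of edges $e$ satisfies $$e\le\begin{cases}2^{1/3}(vw)^{2/3}&\text{if }\max(v,w)\le\lfloor\min(v,w)^2/4\rfloor,\\ \lfloor\min(v,w)^2/4\rfloor+\max(v,w)&\text{otherwise.}\end{cases}$$ Moreover the second bound is attained: with $v=\min(v,w)$, split $V=V_1\cup V_2$ with $\#V_1=\lceil v/2\rceil$, $\#V_2=\lfloor v/2\rfloor$, let $W$ consist of one vertex for each pair $\{x,y\}$ with $x\in V_1$, $y\in V_2$ (adjacent to $x$ and $y$), together with $\lceil w-v^2/4\rceil$ further vertices each adjacent to exactly one vertex of $V$; this graph has no cycle of length $4$ or $6$ and has exactly $\lfloor v^2/4\rfloor+w$ edges. *)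

theory Defs
  imports Complex_Main
begin

definition bipartite_graph :: "('a \<Rightarrow> 'a \<Rightarrow> bool) \<Rightarrow> 'a set \<Rightarrow> 'a set \<Rightarrow> bool" where
  "bipartite_graph adj V W \<longleftrightarrow>
     finite V \<and> finite W \<and> V \<inter> W = {} \<and>
     (\<forall>x y. adj x y \<longleftrightarrow> adj y x) \<and> (\<forall>x. \<not> adj x x) \<and>
     (\<forall>x y. adj x y \<longrightarrow> (x \<in> V \<and> y \<in> W) \<or> (x \<in> W \<and> y \<in> V))"

definition has_cycle :: "('a \<Rightarrow> 'a \<Rightarrow> bool) \<Rightarrow> nat \<Rightarrow> bool" where
  "has_cycle adj k \<longleftrightarrow>
     (\<exists>u :: nat \<Rightarrow> 'a. inj_on u {..<k} \<and> (\<forall>i<k. adj (u i) (u (Suc i mod k))))"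

definition num_edges :: "('a \<Rightarrow> 'a \<Rightarrow> bool) \<Rightarrow> nat" where
  "num_edges adj = card {{x, y} | x y. adj x y}"

text \<open>L i (i < v) are the vertices of V, with
  V1 = {L i | i < ceil(v/2)}, V2 = {L i | ceil(v/2) \<le> i < v};
  P a b is the W-vertex for the pair (L a, L b) with L a in V1, L b in V2;
  X k (k < ceil(w - v^2/4)) are the further W-vertices, X k adjacent to L (g k).\<close>

datatype cvert = L nat | P nat nat | X nat

definition n_extra :: "nat \<Rightarrow> nat \<Rightarrow> nat" where
  "n_extra v w = nat \<lceil>real w - real v ^ 2 / 4\<rceil>"

fun cedge :: "nat \<Rightarrow> nat \<Rightarrow> (nat \<Rightarrow> nat) \<Rightarrow> cvert \<Rightarrow> cvert \<Rightarrow> bool" where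
  "cedge v w g (L i) (P a b) \<longleftrightarrow>
     a < nat \<lceil>real v / 2\<rceil> \<and> nat \<lceil>real v / 2\<rceil> \<le> b \<and> b < v \<and> (i = a \<or> i = b)"
| "cedge v w g (L i) (X k) \<longleftrightarrow> k < n_extra v w \<and> i = g k"
| "cedge v w g _ _ \<longleftrightarrow> False"

definition cadj :: "nat \<Rightarrow> nat \<Rightarrow> (nat \<Rightarrow> nat) \<Rightarrow> cvert \<Rightarrow> cvert \<Rightarrow> bool" where
  "cadj v w g x y \<longleftrightarrow> cedge v w g x y \<or> cedge v w g y x"

definition cV :: "nat \<Rightarrow> cvert set" where
  "cV v = L ` {..<v}"

definition cW :: "nat \<Rightarrow> nat \<Rightarrow> cvert set" where
  "cW v w = {P a b | a b. a < nat \<lceil>real v / 2\<rceil> \<and> nat \<lceil>real v / 2\<rceil> \<le> b \<and> b < v}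
            \<union> X ` {..<n_extra v w}"

end

(* Give every y in W one neighbour pivot y. Each other edge x y yields the pair (pivot y, x)
   of vertices of V. Without 4-cycles these pairs are distinct and never occur in both
   orders. Without 4- and 6-cycles they form a triangle-free graph on V. Mantel's theorem
   then gives e <= v^2/4 + w.

   Without 4- and 6-cycles, any x in V and y in W are joined by at most one path of
   length 1 or 3, so the sum over the edges x y of (d x - 1)(d y - 1) + 1 is at most v w.
   If all degrees are at least 2, this bounds the sum of d x d y by 2 v w. Hoelder's
   inequality together with the sums of 1 / d x and 1 / d y (at most v and w) then gives
   e^3 <= 2 (v w)^2.

   Leaves are removed by induction. While 4 max(v, w) <= min(v, w)^2, the bound
   2^(1/3) (v w)^(2/3) drops by at least 1 when v drops by 1. If a removal leaves that
   regime, the Mantel-type bound is already strong enough.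

   In the extremal graph, two vertices of V have at most one common neighbour, and only
   if they lie in different halves. This excludes 4-cycles and 6-cycles. *)

theory Submission
  imports Defs "HOL-Analysis.Analysis"
begin

lemma all_less_4_iff: "(\<forall>i<4. Q (i::nat)) \<longleftrightarrow> Q 0 \<and> Q 1 \<and> Q 2 \<and> Q 3"
  by (auto simp: numeral_eq_Suc All_less_Suc)

lemma ex_length_4_iff: "(\<exists>xs. length xs = 4 \<and> Q xs) \<longleftrightarrow> (\<exists>a b c d. Q [a, b, c, d])"
proof
  assume "\<exists>xs. length xs = 4 \<and> Q xs"
  then show "\<exists>a b c d. Q [a, b, c, d]" by (auto simp: numeral_eq_Suc length_Suc_conv)
next
  assume "\<exists>a b c d. Q [a, b, c, d]"
  then obtain a b c d where "Q [a, b, c, d]" by blast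
  then show "\<exists>xs. length xs = 4 \<and> Q xs" by (intro exI[of _ "[a, b, c, d]"]) simp
qed

lemma all_less_6_iff: "(\<forall>i<6. Q (i::nat)) \<longleftrightarrow> Q 0 \<and> Q 1 \<and> Q 2 \<and> Q 3 \<and> Q 4 \<and> Q 5"
  by (auto simp: numeral_eq_Suc All_less_Suc)

lemma ex_length_6_iff: "(\<exists>xs. length xs = 6 \<and> Q xs) \<longleftrightarrow> (\<exists>a b c d e f. Q [a, b, c, d, e, f])"
proof
  assume "\<exists>xs. length xs = 6 \<and> Q xs"
  then show "\<exists>a b c d e f. Q [a, b, c, d, e, f]"
    by (auto simp: numeral_eq_Suc length_Suc_conv) blast
next
  assume "\<exists>a b c d e f. Q [a, b, c, d, e, f]"
  then obtain a b c d e f where "Q [a, b, c, d, e, f]" by blast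
  then show "\<exists>xs. length xs = 6 \<and> Q xs" by (intro exI[of _ "[a, b, c, d, e, f]"]) simp
qed

lemma has_cycle_iff_list:
  "has_cycle adj k \<longleftrightarrow>
     (\<exists>xs. length xs = k \<and> distinct xs \<and> (\<forall>i<k. adj (xs ! i) (xs ! (Suc i mod k))))"
proof
  assume "has_cycle adj k"
  then obtain u where u: "inj_on u {..<k}" "\<forall>i<k. adj (u i) (u (Suc i mod k))"
    unfolding has_cycle_def by blast
  then show "\<exists>xs. length xs = k \<and> distinct xs \<and> (\<forall>i<k. adj (xs ! i) (xs ! (Suc i mod k)))"
    by (intro exI[of _ "map u [0..<k]"]) (auto simp: distinct_map atLeast0LessThan)
next
  assume "\<exists>xs. length xs = k \<and> distinct xs \<and> (\<forall>i<k. adj (xs ! i) (xs ! (Suc i mod k)))"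
  then obtain xs where "length xs = k" "distinct xs" "\<forall>i<k. adj (xs ! i) (xs ! (Suc i mod k))"
    by blast
  then show "has_cycle adj k"
    unfolding has_cycle_def
      by (intro exI[of _ "nth xs"]) (auto simp: inj_on_def nth_eq_iff_index_eq)
qed

lemma has_cycle_4_iff:
  "has_cycle adj 4 \<longleftrightarrow>
     (\<exists>a b c d. distinct [a, b, c, d] \<and> adj a b \<and> adj b c \<and> adj c d \<and> adj d a)"
  unfolding has_cycle_iff_list ex_length_4_iff all_less_4_iff by simp

lemma has_cycle_6_iff:
  "has_cycle adj 6 \<longleftrightarrow>
     (\<exists>a b c d e f. distinct [a, b, c, d, e, f] \<and>
        adj a b \<and> adj b c \<and> adj c d \<and> adj d e \<and> adj e f \<and> adj f a)"
  unfolding has_cycle_iff_list ex_length_6_iff all_less_6_iff by simp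

lemma has_cycle_mono:
  assumes "has_cycle adj' k" "\<And>a b. adj' a b \<Longrightarrow> adj a b"
  shows "has_cycle adj k"
  using assms unfolding has_cycle_def by blast

lemma bipartite_graphD:
  assumes "bipartite_graph adj V W"
  shows "finite V" "finite W" "V \<inter> W = {}" "adj x y \<longleftrightarrow> adj y x" "\<not> adj x x"
    "adj x y \<Longrightarrow> (x \<in> V \<and> y \<in> W) \<or> (x \<in> W \<and> y \<in> V)"
  using assms unfolding bipartite_graph_def by blast+

lemma bipartite_graph_commute: "bipartite_graph adj V W \<Longrightarrow> bipartite_graph adj W V"
  unfolding bipartite_graph_def by blast

lemma bipartite_has_cycle_4I:
  assumes bip: "bipartite_graph adj V W"
    and "x \<in> V" "x' \<in> V" "x \<noteq> x'" "y \<noteq> y'" "adj x y" "adj x' y" "adj x y'" "adj x' y'"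
  shows "has_cycle adj 4"
proof -
  note G = bipartite_graphD[OF bip]
  have "y \<in> W" "y' \<in> W" using assms(2,6,8) G(3,6) by blast+
  then have "distinct [x, y, x', y']" using assms(2-5) G(3) by auto
  moreover have "adj y x'" "adj y' x" using assms(7,8) G(4) by blast+
  ultimately show ?thesis unfolding has_cycle_4_iff using assms(6,9) by blast
qed

lemma bipartite_has_cycle_6I:
  assumes bip: "bipartite_graph adj V W"
    and "x1 \<in> V" "x2 \<in> V" "x3 \<in> V" "distinct [x1, x2, x3]" "distinct [y1, y2, y3]"
    and "adj x1 y1" "adj x2 y1" "adj x2 y2" "adj x3 y2" "adj x3 y3" "adj x1 y3"
  shows "has_cycle adj 6"
proof -
  note G = bipartite_graphD[OF bip]
  have "y1 \<in> W" "y2 \<in> W" "y3 \<in> W" using assms(2,3,4,7,9,11) G(3,6) by blast+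
  then have "distinct [x1, y1, x2, y2, x3, y3]" using assms(2-6) G(3) by auto
  moreover have "adj y1 x2" "adj y2 x3" "adj y3 x1" using assms(8,10,12) G(4) by blast+
  ultimately show ?thesis unfolding has_cycle_6_iff using assms(7,9,11) by blast
qed

lemma bipartite_has_cycle_4E:
  assumes bip: "bipartite_graph adj V W" and "has_cycle adj 4"
  obtains x x' y y' where "x \<in> V" "x' \<in> V" "x \<noteq> x'" "y \<noteq> y'"
    "adj x y" "adj x' y" "adj x y'" "adj x' y'"
proof -
  note G = bipartite_graphD[OF bip]
  obtain a b c d where cyc: "distinct [a, b, c, d]" "adj a b" "adj b c" "adj c d" "adj d a"
    using \<open>has_cycle adj 4\<close> unfolding has_cycle_4_iff by blast
  then have sym: "adj b a" "adj c b" "adj d c" "adj a d" using G(4) by blast+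
  consider "a \<in> V" "c \<in> V" | "b \<in> V" "d \<in> V" using cyc(2,3,4) G(3,6) by blast
  then show ?thesis
  proof cases
    case 1 with cyc sym show ?thesis by (intro that[of a c b d]) auto
  next
    case 2 with cyc sym show ?thesis by (intro that[of b d c a]) auto
  qed
qed

lemma bipartite_has_cycle_6E:
  assumes bip: "bipartite_graph adj V W" and "has_cycle adj 6"
  obtains x1 x2 x3 y1 y2 y3 where "x1 \<in> V" "x2 \<in> V" "x3 \<in> V" "distinct [x1, x2, x3]"
    "adj x1 y1" "adj x2 y1" "adj x2 y2" "adj x3 y2" "adj x3 y3" "adj x1 y3"
proof -
  note G = bipartite_graphD[OF bip]
  obtain a b c d e f where cyc: "distinct [a, b, c, d, e, f]"
    "adj a b" "adj b c" "adj c d" "adj d e" "adj e f" "adj f a"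
    using \<open>has_cycle adj 6\<close> unfolding has_cycle_6_iff by blast
  then have sym: "adj b a" "adj c b" "adj d c" "adj e d" "adj f e" "adj a f" using G(4) by blast+
  consider "a \<in> V" "c \<in> V" "e \<in> V" | "b \<in> V" "d \<in> V" "f \<in> V" using cyc(2-6) G(3,6) by blast
  then show ?thesis
  proof cases
    case 1 with cyc sym show ?thesis by (intro that[of a c e b d f]) auto
  next
    case 2 with cyc sym show ?thesis by (intro that[of b d f c e a]) auto
  qed
qed

definition edge_pairs :: "('a \<Rightarrow> 'a \<Rightarrow> bool) \<Rightarrow> 'a set \<Rightarrow> 'a set \<Rightarrow> ('a \<times> 'a) set" where
  "edge_pairs adj V W = {(x, y). x \<in> V \<and> y \<in> W \<and> adj x y}"

definition deg :: "('a \<Rightarrow> 'a \<Rightarrow> bool) \<Rightarrow> 'a \<Rightarrow> nat" where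
  "deg adj z = card {t. adj z t}"

lemma edge_pairs_subset: "edge_pairs adj V W \<subseteq> V \<times> W"
  unfolding edge_pairs_def by blast

lemma finite_edge_pairs: "bipartite_graph adj V W \<Longrightarrow> finite (edge_pairs adj V W)"
  using bipartite_graphD(1,2) edge_pairs_subset by (metis finite_SigmaI finite_subset)

lemma finite_neighbours:
  assumes "bipartite_graph adj V W" shows "finite {t. adj z t}"
proof (rule finite_subset)
  show "{t. adj z t} \<subseteq> V \<union> W" using bipartite_graphD(6)[OF assms] by blast
  show "finite (V \<union> W)" using bipartite_graphD(1,2)[OF assms] by blast
qed

lemma num_edges_eq_card_edge_pairs:
  assumes bip: "bipartite_graph adj V W"
  shows "num_edges adj = card (edge_pairs adj V W)"
proof -
  note G = bipartite_graphD[OF bip]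
  have "{{x, y} | x y. adj x y} = (\<lambda>(x, y). {x, y}) ` edge_pairs adj V W"
  proof (intro equalityI subsetI)
    fix s assume "s \<in> {{x, y} | x y. adj x y}"
    then obtain x y where "s = {x, y}" "adj x y" by blast
    then consider "(x, y) \<in> edge_pairs adj V W" | "(y, x) \<in> edge_pairs adj V W"
      using G(6) G(4)[of x y] unfolding edge_pairs_def by blast
    then show "s \<in> (\<lambda>(x, y). {x, y}) ` edge_pairs adj V W"
      using \<open>s = {x, y}\<close> by cases (force simp: insert_commute)+
  qed (auto simp: edge_pairs_def)
  moreover have "inj_on (\<lambda>(x, y). {x, y}) (edge_pairs adj V W)"
    using G(3) by (auto simp: inj_on_def edge_pairs_def doubleton_eq_iff)
  ultimately show ?thesis unfolding num_edges_def by (simp add: card_image)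
qed

lemma edge_pairs_commute:
  assumes "bipartite_graph adj V W"
  shows "edge_pairs adj W V = prod.swap ` edge_pairs adj V W"
proof -
  have "adj x y \<longleftrightarrow> adj y x" for x y using bipartite_graphD(4)[OF assms] .
  then show ?thesis unfolding edge_pairs_def by auto
qed

lemma edge_pairs_eq_Sigma:
  assumes "bipartite_graph adj V W"
  shows "edge_pairs adj V W = Sigma V (\<lambda>x. {y. adj x y})"
  using bipartite_graphD(3,6)[OF assms] unfolding edge_pairs_def by blast

lemma num_edges_eq_sum_deg:
  assumes bip: "bipartite_graph adj V W"
  shows "num_edges adj = (\<Sum>y\<in>W. deg adj y)"
proof -
  have "num_edges adj = card (edge_pairs adj W V)"
    unfolding num_edges_eq_card_edge_pairs[OF bip] edge_pairs_commute[OF bip]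
    by (simp add: card_image)
  also have "\<dots> = (\<Sum>y\<in>W. deg adj y)"
    unfolding edge_pairs_eq_Sigma[OF bipartite_graph_commute[OF bip]] deg_def
    using bipartite_graphD(2)[OF bip] finite_neighbours[OF bip] by (simp add: card_SigmaI)
  finally show ?thesis .
qed

lemma mantel:
  fixes D :: "('a \<times> 'a) set"
  assumes fin: "finite V" and sub: "D \<subseteq> V \<times> V" and "sym D"
    and triangle_free: "\<And>a b c. (a, b) \<in> D \<Longrightarrow> (b, c) \<in> D \<Longrightarrow> (a, c) \<in> D \<Longrightarrow> False"
  shows "2 * card D \<le> card V ^ 2"
proof -
  define d where "d a = card (D `` {a})" for a
  have nb_sub: "D `` {a} \<subseteq> V" for a using sub by blast
  have fin_nb: "finite (D `` {a})" for a using nb_sub fin finite_subset by blast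
  have D_Sigma: "D = Sigma V (\<lambda>a. D `` {a})" using sub by blast
  have card_D: "card D = (\<Sum>a\<in>V. d a)"
    unfolding d_def by (subst D_Sigma, rule card_SigmaI) (use fin fin_nb in auto)
  have edge: "d a + d b \<le> card V" if "(a, b) \<in> D" for a b
  proof -
    have "D `` {a} \<inter> D `` {b} = {}"
      using triangle_free symD[OF \<open>sym D\<close>] that by blast
    then have "d a + d b = card (D `` {a} \<union> D `` {b})" by (simp add: d_def card_Un_disjoint fin_nb)
    also have "\<dots> \<le> card V" using nb_sub by (intro card_mono fin) auto
    finally show ?thesis .
  qed
  have "(\<Sum>(a, b)\<in>D. d a) = (\<Sum>a\<in>V. \<Sum>b\<in>D `` {a}. d a)"
    by (subst D_Sigma, rule sum.Sigma[symmetric]) (use fin fin_nb in auto)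
  then have sum_left: "(\<Sum>(a, b)\<in>D. d a) = (\<Sum>a\<in>V. d a ^ 2)"
    by (simp add: d_def power2_eq_square)
  have "(\<Sum>(a, b)\<in>D. d b) = (\<Sum>(a, b)\<in>prod.swap ` D. d a)"
    by (simp add: sum.reindex case_prod_beta)
  also have "prod.swap ` D = D" using symD[OF \<open>sym D\<close>] by force
  finally have sum_right: "(\<Sum>(a, b)\<in>D. d b) = (\<Sum>a\<in>V. d a ^ 2)" using sum_left by simp
  define Q where "Q = (\<Sum>a\<in>V. d a ^ 2)"
  have "2 * Q = (\<Sum>(a, b)\<in>D. d a + d b)"
    using sum_left sum_right by (simp add: Q_def sum.distrib case_prod_beta)
  also have "\<dots> \<le> (\<Sum>(a, b)\<in>D. card V)"
    by (rule sum_mono) (use edge in auto)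
  finally have squares: "2 * Q \<le> card D * card V" by simp
  have "real (card D) ^ 2 \<le> real Q * real (card V)"
    using sum_squared_le_sum_of_squares[of "\<lambda>a. real (d a)" V] by (simp add: card_D Q_def)
  then have cauchy_schwarz: "card D ^ 2 \<le> Q * card V"
    unfolding of_nat_power[symmetric] of_nat_mult[symmetric] of_nat_le_iff .
  have "card D * (2 * card D) = 2 * card D ^ 2" by (simp add: power2_eq_square)
  also have "\<dots> \<le> 2 * Q * card V" using cauchy_schwarz by simp
  also have "\<dots> \<le> card D * card V * card V" using squares by (rule mult_right_mono) simp
  finally have "card D * (2 * card D) \<le> card D * card V ^ 2" by (simp add: power2_eq_square)
  then show ?thesis by (cases "card D = 0") auto
qed

lemma mantel_oriented:
  fixes R :: "('a \<times> 'a) set"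
  assumes "finite V" and "R \<subseteq> V \<times> V" and "R \<inter> R\<inverse> = {}"
    and triangle_free:
      "\<And>a b c. (a, b) \<in> R \<union> R\<inverse> \<Longrightarrow> (b, c) \<in> R \<union> R\<inverse> \<Longrightarrow> (a, c) \<in> R \<union> R\<inverse> \<Longrightarrow> False"
  shows "4 * card R \<le> card V ^ 2"
proof -
  have "finite R" using assms(1,2) finite_subset by blast
  then have "card (R \<union> R\<inverse>) = 2 * card R" using assms(3) by (simp add: card_Un_disjoint)
  moreover have "2 * card (R \<union> R\<inverse>) \<le> card V ^ 2"
  proof (rule mantel)
    show "R \<union> R\<inverse> \<subseteq> V \<times> V" using assms(2) by blast
  qed (use assms(1) triangle_free sym_Un_converse in blast)+
  ultimately show ?thesis by simp
qed

lemma three_le_sum_if_prod_eq_1: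
  fixes p q r :: real
  assumes "p > 0" "q > 0" "r > 0" "p * q * r = 1"
  shows "3 \<le> p + q + r"
proof -
  define a b c where "a = root 3 p" and "b = root 3 q" and "c = root 3 r"
  have pos: "a > 0" "b > 0" "c > 0" using assms unfolding a_def b_def c_def by auto
  have cubes: "a ^ 3 = p" "b ^ 3 = q" "c ^ 3 = r"
    using assms unfolding a_def b_def c_def by (auto simp: real_root_pow_pos2)
  have "(a * b * c) ^ 3 = 1 ^ 3" using cubes assms(4) by (simp add: power_mult_distrib)
  then have abc: "a * b * c = 1" by (rule power_eq_imp_eq_base) (use pos in simp_all)
  have "a ^ 3 + b ^ 3 + c ^ 3 - 3 * (a * b * c)
      = (a + b + c) * ((a - b)^2 + (b - c)^2 + (c - a)^2) / 2"
    by (simp add: power2_eq_square power3_eq_cube algebra_simps)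
  also have "\<dots> \<ge> 0" using pos by (intro divide_nonneg_pos mult_nonneg_nonneg) auto
  finally show ?thesis using cubes abc by simp
qed

\<comment> \<open>Hoelder's inequality with exponents (3, 3, 3), normalized to termwise products 1.\<close>
lemma card_cube_le_prod_sums:
  fixes a b c :: "'i \<Rightarrow> real"
  assumes "finite A" and pos: "\<And>i. i \<in> A \<Longrightarrow> a i > 0 \<and> b i > 0 \<and> c i > 0"
    and prod: "\<And>i. i \<in> A \<Longrightarrow> a i * b i * c i = 1"
  shows "real (card A) ^ 3 \<le> (\<Sum>i\<in>A. a i) * (\<Sum>i\<in>A. b i) * (\<Sum>i\<in>A. c i)"
proof (cases "A = {}")
  case False
  define Sa Sb Sc where "Sa = (\<Sum>i\<in>A. a i)" and "Sb = (\<Sum>i\<in>A. b i)" and "Sc = (\<Sum>i\<in>A. c i)"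
  have sums_pos: "Sa > 0" "Sb > 0" "Sc > 0"
    unfolding Sa_def Sb_def Sc_def using pos by (auto intro!: sum_pos \<open>finite A\<close> False)
  define K where "K = root 3 (Sa * Sb * Sc)"
  have K: "K > 0" "K ^ 3 = Sa * Sb * Sc"
    unfolding K_def using sums_pos by (auto simp: real_root_pow_pos2)
  have termwise: "3 \<le> a i * K / Sa + b i * K / Sb + c i * K / Sc" if "i \<in> A" for i
  proof (rule three_le_sum_if_prod_eq_1)
    show "a i * K / Sa > 0" "b i * K / Sb > 0" "c i * K / Sc > 0"
      using pos[OF that] K sums_pos by auto
    have "a i * K / Sa * (b i * K / Sb) * (c i * K / Sc)
        = (a i * b i * c i) * K ^ 3 / (Sa * Sb * Sc)"
      by (simp add: power3_eq_cube field_simps)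
    also have "\<dots> = 1" using prod[OF that] K(2) sums_pos by simp
    finally show "a i * K / Sa * (b i * K / Sb) * (c i * K / Sc) = 1" .
  qed
  have "3 * real (card A) = (\<Sum>i\<in>A. 3)" by simp
  also have "\<dots> \<le> (\<Sum>i\<in>A. a i * K / Sa + b i * K / Sb + c i * K / Sc)"
    by (rule sum_mono) (rule termwise)
  also have "\<dots> = Sa * K / Sa + Sb * K / Sb + Sc * K / Sc"
    unfolding Sa_def Sb_def Sc_def
    by (simp add: sum.distrib sum_divide_distrib[symmetric] sum_distrib_right[symmetric])
  also have "\<dots> = 3 * K" using sums_pos by simp
  finally have "real (card A) ^ 3 \<le> K ^ 3" by (intro power_mono) auto
  then show ?thesis using K(2) unfolding Sa_def Sb_def Sc_def by simp
qed simp

lemma sum_inverse_deg_fst_le: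
  assumes bip: "bipartite_graph adj V W"
  shows "(\<Sum>(x, y)\<in>edge_pairs adj V W. 1 / real (deg adj x)) \<le> real (card V)"
proof -
  have "(\<Sum>(x, y)\<in>edge_pairs adj V W. 1 / real (deg adj x))
      = (\<Sum>x\<in>V. \<Sum>y\<in>{y. adj x y}. 1 / real (deg adj x))"
    unfolding edge_pairs_eq_Sigma[OF bip]
    by (rule sum.Sigma[symmetric])
      (use bipartite_graphD(1)[OF bip] finite_neighbours[OF bip] in auto)
  also have "\<dots> \<le> (\<Sum>x\<in>V. 1)"
    by (intro sum_mono) (simp add: deg_def)
  finally show ?thesis by simp
qed

lemma sum_inverse_deg_snd_le:
  assumes bip: "bipartite_graph adj V W"
  shows "(\<Sum>(x, y)\<in>edge_pairs adj V W. 1 / real (deg adj y)) \<le> real (card W)"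
proof -
  have "(\<Sum>(x, y)\<in>edge_pairs adj V W. 1 / real (deg adj y))
      = (\<Sum>(y, x)\<in>edge_pairs adj W V. 1 / real (deg adj y))"
    unfolding edge_pairs_commute[OF bip] by (simp add: sum.reindex case_prod_beta)
  also have "\<dots> \<le> real (card W)"
    by (rule sum_inverse_deg_fst_le[OF bipartite_graph_commute[OF bip]])
  finally show ?thesis .
qed

locale C4_C6_free_bipartite =
  fixes adj :: "'a \<Rightarrow> 'a \<Rightarrow> bool" and V W :: "'a set"
  assumes bipartite: "bipartite_graph adj V W"
    and no_C4: "\<not> has_cycle adj 4" and no_C6: "\<not> has_cycle adj 6"
begin

lemma commute: "C4_C6_free_bipartite adj W V"
  using bipartite_graph_commute bipartite no_C4 no_C6 by unfold_locales auto

lemma neighbour_in_W: "x \<in> V \<Longrightarrow> adj x y \<Longrightarrow> y \<in> W"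
  using bipartite_graphD[OF bipartite] by blast

lemma neighbour_in_V: "y \<in> W \<Longrightarrow> adj x y \<Longrightarrow> x \<in> V"
  using bipartite_graphD[OF bipartite] by blast

lemma adj_commute: "adj x y \<longleftrightarrow> adj y x"
  using bipartite_graphD(4)[OF bipartite] .

lemma common_neighbour_unique:
  assumes "x \<in> V" "x' \<in> V" "x \<noteq> x'" "adj x y" "adj x' y" "adj x y'" "adj x' y'"
  shows "y = y'"
proof (rule ccontr)
  assume "y \<noteq> y'"
  with assms have "has_cycle adj 4" by (intro bipartite_has_cycle_4I[OF bipartite])
  with no_C4 show False by blast
qed

lemma common_neighbours_of_triple:
  assumes "a \<in> V" "b \<in> V" "c \<in> V" "distinct [a, b, c]"
    and "adj a y1" "adj b y1" "adj b y2" "adj c y2" "adj a y3" "adj c y3"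
  shows "y1 = y2 \<and> y2 = y3"
proof (cases "distinct [y1, y2, y3]")
  case True
  with assms have "has_cycle adj 6"
    by (intro bipartite_has_cycle_6I[OF bipartite, of a b c y1 y2 y3]) auto
  with no_C6 show ?thesis by blast
next
  case False
  then consider "y1 = y2" | "y2 = y3" | "y1 = y3" by auto
  then show ?thesis
  proof cases
    case 1
    then show ?thesis using common_neighbour_unique[of a c y1 y3] assms by simp
  next
    case 2
    then show ?thesis using common_neighbour_unique[of a b y1 y2] assms by simp
  next
    case 3
    then show ?thesis using common_neighbour_unique[of b c y2 y1] assms by simp
  qed
qed

\<comment> \<open>Junk for isolated y; only pivots of vertices with a neighbour are ever used.\<close>
definition pivot :: "'a \<Rightarrow> 'a" where
  "pivot y = (SOME x. adj x y)"

definition nonpivot_edges :: "('a \<times> 'a) set" where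
  "nonpivot_edges = {(x, y) \<in> edge_pairs adj V W. x \<noteq> pivot y}"

definition pivot_pairs :: "('a \<times> 'a) set" where
  "pivot_pairs = (\<lambda>(x, y). (pivot y, x)) ` nonpivot_edges"

lemma adj_pivot: "adj x y \<Longrightarrow> adj (pivot y) y"
  unfolding pivot_def by (rule someI)

lemma nonpivot_edgesD:
  "(x, y) \<in> nonpivot_edges \<Longrightarrow>
     x \<in> V \<and> y \<in> W \<and> adj x y \<and> pivot y \<in> V \<and> adj (pivot y) y \<and> x \<noteq> pivot y"
  unfolding nonpivot_edges_def edge_pairs_def using adj_pivot neighbour_in_V by blast

lemma finite_nonpivot_edges: "finite nonpivot_edges"
  using finite_edge_pairs[OF bipartite] unfolding nonpivot_edges_def
    by (rule finite_subset[rotated]) auto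

lemma card_edge_pairs_le_nonpivot:
  "card (edge_pairs adj V W) \<le> card nonpivot_edges + card W"
proof -
  have "edge_pairs adj V W \<subseteq> nonpivot_edges \<union> (\<lambda>y. (pivot y, y)) ` W"
    unfolding nonpivot_edges_def edge_pairs_def by auto
  then have "card (edge_pairs adj V W) \<le> card (nonpivot_edges \<union> (\<lambda>y. (pivot y, y)) ` W)"
    using finite_nonpivot_edges bipartite_graphD(2)[OF bipartite] by (intro card_mono) auto
  also have "\<dots> \<le> card nonpivot_edges + card ((\<lambda>y. (pivot y, y)) ` W)"
    by (rule card_Un_le)
  also have "\<dots> \<le> card nonpivot_edges + card W"
    by (intro add_left_mono card_image_le bipartite_graphD(2)[OF bipartite])
  finally show ?thesis .
qed

lemma card_pivot_pairs: "card pivot_pairs = card nonpivot_edges"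
proof -
  have "y = y'" if "(x, y) \<in> nonpivot_edges" "(x, y') \<in> nonpivot_edges" "pivot y = pivot y'"
    for x y y'
    using nonpivot_edgesD[OF that(1)] nonpivot_edgesD[OF that(2)] that(3)
      common_neighbour_unique[of "pivot y" x y y'] by auto
  then have "inj_on (\<lambda>(x, y). (pivot y, x)) nonpivot_edges" by (auto simp: inj_on_def)
  then show ?thesis unfolding pivot_pairs_def by (rule card_image)
qed

lemma pivot_pairs_asym: "pivot_pairs \<inter> pivot_pairs\<inverse> = {}"
proof -
  have False if "(x, y) \<in> nonpivot_edges" "(x', y') \<in> nonpivot_edges"
    "pivot y = x'" "x = pivot y'" for x y x' y'
    using nonpivot_edgesD[OF that(1)] nonpivot_edgesD[OF that(2)] that(3,4)
      common_neighbour_unique[of x x' y y'] by auto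
  then show ?thesis unfolding pivot_pairs_def by fast
qed

lemma pivot_pairs_witness:
  assumes "(p, q) \<in> pivot_pairs \<union> pivot_pairs\<inverse>"
  obtains y where "p \<in> V" "q \<in> V" "p \<noteq> q" "adj p y" "adj q y" "pivot y = p \<or> pivot y = q"
  using assms unfolding pivot_pairs_def by (auto dest!: nonpivot_edgesD)

lemma pivot_pairs_triangle_free:
  assumes "(a, b) \<in> pivot_pairs \<union> pivot_pairs\<inverse>" "(b, c) \<in> pivot_pairs \<union> pivot_pairs\<inverse>"
    and "(a, c) \<in> pivot_pairs \<union> pivot_pairs\<inverse>"
  shows False
proof -
  obtain y1 where y1: "a \<in> V" "b \<in> V" "a \<noteq> b" "adj a y1" "adj b y1" "pivot y1 = a \<or> pivot y1 = b"
    using assms(1) by (rule pivot_pairs_witness)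
  obtain y2 where y2: "c \<in> V" "b \<noteq> c" "adj b y2" "adj c y2" "pivot y2 = b \<or> pivot y2 = c"
    using assms(2) by (rule pivot_pairs_witness)
  obtain y3 where y3: "a \<noteq> c" "adj a y3" "adj c y3" "pivot y3 = a \<or> pivot y3 = c"
    using assms(3) by (rule pivot_pairs_witness)
  have "y1 = y2 \<and> y2 = y3"
    using y1 y2 y3 by (intro common_neighbours_of_triple[of a b c]) auto
  with y1(3,6) y2(2,5) y3(1,4) show False by auto
qed

lemma four_num_edges_le: "4 * num_edges adj \<le> card V ^ 2 + 4 * card W"
proof -
  have "pivot_pairs \<subseteq> V \<times> V" unfolding pivot_pairs_def by (auto dest!: nonpivot_edgesD)
  with bipartite_graphD(1)[OF bipartite] have "4 * card pivot_pairs \<le> card V ^ 2"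
    using pivot_pairs_asym pivot_pairs_triangle_free by (rule mantel_oriented)
  then show ?thesis
    using card_edge_pairs_le_nonpivot card_pivot_pairs num_edges_eq_card_edge_pairs[OF bipartite]
    by linarith
qed

lemma path3_unique:
  assumes "x \<in> V" "x1 \<in> V" "x1' \<in> V" "x \<noteq> x1" "x \<noteq> x1'" "y \<noteq> y1" "y \<noteq> y1'"
    and "adj x y1" "adj x1 y1" "adj x1 y" and "adj x y1'" "adj x1' y1'" "adj x1' y"
  shows "x1 = x1' \<and> y1 = y1'"
proof -
  have "x1 = x1'"
  proof (rule ccontr)
    assume "x1 \<noteq> x1'"
    then have "y1 = y \<and> y = y1'"
      using assms by (intro common_neighbours_of_triple[of x x1 x1']) auto
    with \<open>y \<noteq> y1\<close> show False by simp
  qed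
  moreover have "y1 = y1'"
    using assms \<open>x1 = x1'\<close> by (intro common_neighbour_unique[of x x1]) auto
  ultimately show ?thesis ..
qed

lemma path3_ends_not_adjacent:
  assumes "x \<in> V" "x1 \<in> V" "x \<noteq> x1" "y \<noteq> y1" "adj x y1" "adj x1 y1" "adj x1 y"
  shows "\<not> adj x y"
  using common_neighbour_unique[of x x1 y1 y] assms by auto

\<comment> \<open>((x1, y1), (x, y)) encodes the path x, y1, x1, y of length 3 with middle edge x1 y1.\<close>
definition paths3 :: "(('a \<times> 'a) \<times> ('a \<times> 'a)) set" where
  "paths3 = (SIGMA (x1, y1):edge_pairs adj V W. ({t. adj y1 t} - {x1}) \<times> ({t. adj x1 t} - {y1}))"

lemma paths3D:
  assumes "((x1, y1), (x, y)) \<in> paths3"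
  shows "x1 \<in> V \<and> x \<in> V \<and> y \<in> W \<and> x \<noteq> x1 \<and> y \<noteq> y1 \<and> adj x y1 \<and> adj x1 y1 \<and> adj x1 y"
proof -
  have "x1 \<in> V" "y1 \<in> W" "adj x1 y1" "adj y1 x" "x \<noteq> x1" "adj x1 y" "y \<noteq> y1"
    using assms unfolding paths3_def edge_pairs_def by auto
  then show ?thesis using adj_commute[of x y1] neighbour_in_V[of y1 x] neighbour_in_W[of x1 y]
    by blast
qed

lemma finite_paths3: "finite paths3"
  unfolding paths3_def using finite_edge_pairs[OF bipartite] finite_neighbours[OF bipartite] by auto

lemma card_paths3:
  "card paths3 = (\<Sum>(x1, y1)\<in>edge_pairs adj V W. (deg adj x1 - 1) * (deg adj y1 - 1))"
proof -
  have "card paths3 = (\<Sum>p\<in>edge_pairs adj V W.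
      card ((\<lambda>(x1, y1). ({t. adj y1 t} - {x1}) \<times> ({t. adj x1 t} - {y1})) p))"
    unfolding paths3_def
    by (rule card_SigmaI)
      (use finite_edge_pairs[OF bipartite] finite_neighbours[OF bipartite] in auto)
  also have "\<dots> = (\<Sum>(x1, y1)\<in>edge_pairs adj V W. (deg adj x1 - 1) * (deg adj y1 - 1))"
  proof (rule sum.cong, simp, clarify)
    fix x1 y1 assume "(x1, y1) \<in> edge_pairs adj V W"
    then have "x1 \<in> {t. adj y1 t}" "y1 \<in> {t. adj x1 t}"
      using adj_commute unfolding edge_pairs_def by auto
    then show "card (({t. adj y1 t} - {x1}) \<times> ({t. adj x1 t} - {y1}))
        = (deg adj x1 - 1) * (deg adj y1 - 1)"
      by (simp add: card_cartesian_product finite_neighbours[OF bipartite] deg_def)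
  qed
  finally show ?thesis .
qed

lemma inj_on_snd_paths3: "inj_on snd paths3"
proof -
  have "x1 = x1' \<and> y1 = y1'"
    if "((x1, y1), (x, y)) \<in> paths3" "((x1', y1'), (x, y)) \<in> paths3" for x1 y1 x1' y1' x y
    using paths3D[OF that(1)] paths3D[OF that(2)]
      by (intro path3_unique[of x x1 x1' y y1 y1']) blast+
  then show ?thesis by (auto simp: inj_on_def)
qed

lemma edge_pairs_disjoint_paths3: "edge_pairs adj V W \<inter> snd ` paths3 = {}"
proof -
  have "(x, y) \<notin> edge_pairs adj V W" if "((x1, y1), (x, y)) \<in> paths3" for x1 y1 x y
    using paths3D[OF that] path3_ends_not_adjacent[of x x1 y y1] unfolding edge_pairs_def by blast
  then show ?thesis by force
qed

lemma sum_pred_deg_products_le: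
  "(\<Sum>(x, y)\<in>edge_pairs adj V W. (deg adj x - 1) * (deg adj y - 1) + 1) \<le> card V * card W"
proof -
  have "edge_pairs adj V W \<union> snd ` paths3 \<subseteq> V \<times> W"
    using paths3D edge_pairs_subset by force
  then have "card (edge_pairs adj V W \<union> snd ` paths3) \<le> card (V \<times> W)"
    using bipartite_graphD(1,2)[OF bipartite] by (intro card_mono) auto
  then have "card (edge_pairs adj V W) + card paths3 \<le> card V * card W"
    using finite_edge_pairs[OF bipartite] finite_paths3 edge_pairs_disjoint_paths3 inj_on_snd_paths3
    by (simp add: card_Un_disjoint card_image card_cartesian_product)
  then show ?thesis unfolding card_paths3 by (simp add: sum_Suc split_def)
qed

lemma sum_deg_products_le:
  assumes "\<And>x y. (x, y) \<in> edge_pairs adj V W \<Longrightarrow> 2 \<le> deg adj x \<and> 2 \<le> deg adj y"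
  shows "(\<Sum>(x, y)\<in>edge_pairs adj V W. deg adj x * deg adj y) \<le> 2 * (card V * card W)"
proof -
  have "deg adj x * deg adj y \<le> 2 * ((deg adj x - 1) * (deg adj y - 1) + 1)"
    if xy: "(x, y) \<in> edge_pairs adj V W" for x y
  proof -
    obtain m n where "deg adj x = 2 + m" "deg adj y = 2 + n"
      using assms[OF xy] le_Suc_ex by metis
    then show ?thesis by (simp add: algebra_simps)
  qed
  then have "(\<Sum>(x, y)\<in>edge_pairs adj V W. deg adj x * deg adj y)
      \<le> (\<Sum>(x, y)\<in>edge_pairs adj V W. 2 * ((deg adj x - 1) * (deg adj y - 1) + 1))"
    by (intro sum_mono) auto
  also have "\<dots> = 2 * (\<Sum>(x, y)\<in>edge_pairs adj V W. (deg adj x - 1) * (deg adj y - 1) + 1)"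
    by (simp add: sum_distrib_left split_def)
  also have "\<dots> \<le> 2 * (card V * card W)"
    using sum_pred_deg_products_le by simp
  finally show ?thesis .
qed

lemma num_edges_cube_le_if_no_leaf:
  assumes no_leaf: "\<And>z. z \<in> V \<union> W \<Longrightarrow> deg adj z \<noteq> 1"
  shows "real (num_edges adj) ^ 3 \<le> 2 * (real (card V) * real (card W)) ^ 2"
proof -
  define E where "E = edge_pairs adj V W"
  have deg_ge_2: "2 \<le> deg adj x \<and> 2 \<le> deg adj y" if "(x, y) \<in> E" for x y
  proof -
    have "x \<in> V" "y \<in> W" "adj x y" "adj y x"
      using that adj_commute[of x y] unfolding E_def edge_pairs_def by auto
    then have "deg adj x \<noteq> 0" "deg adj y \<noteq> 0"
      using finite_neighbours[OF bipartite] unfolding deg_def by (auto simp: card_eq_0_iff)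
    moreover have "deg adj x \<noteq> 1" "deg adj y \<noteq> 1"
      using no_leaf \<open>x \<in> V\<close> \<open>y \<in> W\<close> by auto
    ultimately show ?thesis by linarith
  qed
  define a b c :: "'a \<times> 'a \<Rightarrow> real"
    where "a p = real (deg adj (fst p)) * real (deg adj (snd p))"
      and "b p = 1 / real (deg adj (fst p))" and "c p = 1 / real (deg adj (snd p))" for p
  have "real (card E) ^ 3 \<le> sum a E * sum b E * sum c E"
  proof (rule card_cube_le_prod_sums)
    show "finite E" unfolding E_def by (rule finite_edge_pairs[OF bipartite])
    fix p assume "p \<in> E"
    then have "2 \<le> deg adj (fst p)" "2 \<le> deg adj (snd p)"
      using deg_ge_2[of "fst p" "snd p"] by simp_all
    then show "a p > 0 \<and> b p > 0 \<and> c p > 0" "a p * b p * c p = 1"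
      unfolding a_def b_def c_def by simp_all
  qed
  also have "\<dots> \<le> 2 * real (card V * card W) * real (card V) * real (card W)"
  proof (intro mult_mono)
    have "(\<Sum>(x, y)\<in>E. deg adj x * deg adj y) \<le> 2 * (card V * card W)"
      unfolding E_def by (rule sum_deg_products_le) (use deg_ge_2 in \<open>simp add: E_def\<close>)
    then have "real (\<Sum>(x, y)\<in>E. deg adj x * deg adj y) \<le> real (2 * (card V * card W))"
      by (simp only: of_nat_le_iff)
    then show "sum a E \<le> 2 * real (card V * card W)"
      unfolding a_def by (simp add: of_nat_sum split_def)
    show "sum b E \<le> real (card V)"
      unfolding b_def E_def using sum_inverse_deg_fst_le[OF bipartite] by (simp add: split_def)
    show "sum c E \<le> real (card W)"
      unfolding c_def E_def using sum_inverse_deg_snd_le[OF bipartite] by (simp add: split_def)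
  qed (simp_all add: b_def c_def sum_nonneg)
  finally show ?thesis
    unfolding E_def num_edges_eq_card_edge_pairs[OF bipartite] by (simp add: power2_eq_square)
qed

end

lemma powr_one_third_power3: "0 \<le> x \<Longrightarrow> (x powr (1/3)) ^ 3 = (x :: real)"
  by (cases "x = 0") (simp_all add: powr_power)

lemma powr_two_thirds: "0 \<le> x \<Longrightarrow> (x :: real) powr (2/3) = (x powr (1/3)) ^ 2"
  by (cases "x = 0") (simp_all add: powr_power)

definition cube_bound :: "nat \<Rightarrow> nat \<Rightarrow> real" where
  "cube_bound v w = 2 powr (1/3) * (real v * real w) powr (2/3)"

definition cube_regime :: "nat \<Rightarrow> nat \<Rightarrow> bool" where
  "cube_regime v w \<longleftrightarrow> 4 * max v w \<le> min v w ^ 2"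

lemma cube_bound_commute: "cube_bound v w = cube_bound w v"
  unfolding cube_bound_def by (simp add: mult.commute)

lemma cube_regime_commute: "cube_regime v w = cube_regime w v"
  unfolding cube_regime_def by (simp add: max.commute min.commute)

lemma powr_two_thirds_power3:
  assumes "0 \<le> x" shows "((x :: real) powr (2/3)) ^ 3 = x ^ 2"
proof -
  have "(x powr (2/3)) ^ 3 = ((x powr (1/3)) ^ 3) ^ 2"
    by (simp add: powr_two_thirds[OF assms] flip: power_mult)
  then show ?thesis by (simp add: powr_one_third_power3[OF assms])
qed

lemma cube_bound_power3: "cube_bound v w ^ 3 = 2 * (real v * real w) ^ 2"
  unfolding cube_bound_def power_mult_distrib
  by (simp add: powr_one_third_power3 powr_two_thirds_power3 power_mult_distrib)

lemma le_cube_boundI: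
  assumes "0 \<le> x" "x ^ 3 \<le> 2 * (real v * real w) ^ 2"
  shows "x \<le> cube_bound v w"
proof (rule power_le_imp_le_base[of _ 2])
  show "x ^ Suc 2 \<le> cube_bound v w ^ Suc 2"
    using assms(2) cube_bound_power3[of v w] by (simp add: numeral_3_eq_3)
  show "0 \<le> cube_bound v w" by (simp add: cube_bound_def)
qed

lemma cube_regime_imp_le:
  assumes "cube_regime v w" "1 \<le> v"
  shows "27 * v \<le> 16 * w ^ 2"
proof (cases "v \<le> w")
  case True
  then have "4 * w \<le> v ^ 2" using assms(1) unfolding cube_regime_def by (simp add: max_def min_def)
  with True have "4 * v \<le> v * v" unfolding power2_eq_square by linarith
  then have "4 \<le> v" using mult_le_cancel2[of 4 v v] assms(2) by simp
  then have "27 * v \<le> 16 * (v * v)" by simp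
  also have "\<dots> \<le> 16 * (w * w)" using True by (simp add: mult_le_mono)
  finally show ?thesis by (simp add: power2_eq_square)
next
  case False
  then have "4 * v \<le> w ^ 2" using assms(1) unfolding cube_regime_def by (simp add: max_def min_def)
  then show ?thesis by linarith
qed

text \<open>With a = v^(1/3), b = (v - 1)^(1/3) and c = (2 w^2)^(1/3) the claim reads
  1 \<le> c (a^2 - b^2). Since 1 = a^3 - b^3 = (a - b)(a^2 + a b + b^2) and
  a^2 + a b + b^2 \<le> 3/2 a (a + b), it suffices that 3/2 a \<le> c, i.e. 27 v \<le> 16 w^2.\<close>
lemma cube_bound_pred_plus_1_le:
  assumes "cube_regime v w" "1 \<le> v"
  shows "cube_bound (v - 1) w + 1 \<le> cube_bound v w"
proof -
  define a b c where "a = real v powr (1/3)" and "b = real (v - 1) powr (1/3)"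
    and "c = 2 powr (1/3) * real w powr (2/3)"
  have nonneg: "0 \<le> a" "0 \<le> b" "0 \<le> c" unfolding a_def b_def c_def by simp_all
  have bounds: "cube_bound v w = c * a ^ 2" "cube_bound (v - 1) w = c * b ^ 2"
    unfolding cube_bound_def a_def b_def c_def by (simp_all add: powr_mult powr_two_thirds)
  have a3: "a ^ 3 = real v" and b3: "b ^ 3 = real v - 1"
    unfolding a_def b_def using assms(2) by (simp_all add: powr_one_third_power3 of_nat_diff)
  have c3: "c ^ 3 = 2 * real w ^ 2"
    unfolding c_def power_mult_distrib by (simp add: powr_one_third_power3 powr_two_thirds_power3)
  have "b \<le> a" unfolding a_def b_def by (rule powr_mono2) auto
  have "real (27 * v) \<le> real (16 * w ^ 2)"
    using cube_regime_imp_le[OF assms] by (simp only: of_nat_le_iff)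
  then have "27 * real v \<le> 16 * real w ^ 2" by simp
  have "(3/2 * a) ^ 3 = 27/8 * a ^ 3" by (simp add: power_mult_distrib power_divide)
  also have "\<dots> \<le> c ^ 3" unfolding a3 c3 using \<open>27 * real v \<le> 16 * real w ^ 2\<close> by linarith
  finally have "3/2 * a \<le> c" using nonneg by simp
  have "a^2 + a * b + b^2 \<le> 3/2 * a * (a + b)"
  proof -
    have "3/2 * a * (a + b) - (a^2 + a * b + b^2) = (a - b) * (a / 2 + b)"
      by (simp add: field_simps power2_eq_square)
    also have "\<dots> \<ge> 0" using \<open>b \<le> a\<close> nonneg by simp
    finally show ?thesis by simp
  qed
  have "1 = a ^ 3 - b ^ 3" using a3 b3 by simp
  also have "\<dots> = (a - b) * (a^2 + a * b + b^2)"
    by (simp add: algebra_simps power2_eq_square power3_eq_cube)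
  also have "\<dots> \<le> (a - b) * (3/2 * a * (a + b))"
    using \<open>a^2 + a * b + b^2 \<le> 3/2 * a * (a + b)\<close> \<open>b \<le> a\<close> by (intro mult_left_mono) simp_all
  also have "\<dots> \<le> (a - b) * (c * (a + b))"
    using \<open>3/2 * a \<le> c\<close> \<open>b \<le> a\<close> nonneg by (intro mult_left_mono mult_right_mono) auto
  also have "\<dots> = c * a ^ 2 - c * b ^ 2" by (simp add: algebra_simps power2_eq_square)
  finally show ?thesis unfolding bounds by simp
qed

lemma le_cube_bound_if_not_cube_regime_pred:
  assumes "cube_regime v w" "\<not> cube_regime (v - 1) w" "1 \<le> v"
    and "4 * e \<le> (v - 1) ^ 2 + 4 * w"
  shows "real e + 1 \<le> cube_bound v w"
proof (cases "v \<le> w")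
  case False
  then have "4 * v \<le> w ^ 2" "w \<le> v - 1"
    using assms(1) unfolding cube_regime_def by (simp_all add: max_def min_def)
  then have "4 * max (v - 1) w \<le> min (v - 1) w ^ 2" by simp
  then have "cube_regime (v - 1) w" unfolding cube_regime_def .
  with assms(2) show ?thesis by blast
next
  case True
  then have "4 * w \<le> v ^ 2" using assms(1) unfolding cube_regime_def by (simp add: max_def min_def)
  then have "4 * real w \<le> real v ^ 2"
    by (metis of_nat_le_iff of_nat_mult of_nat_numeral of_nat_power)
  have "max (v - 1) w = w" "min (v - 1) w = v - 1" using True by simp_all
  then have "(v - 1) ^ 2 < 4 * w" using assms(2) unfolding cube_regime_def by simp
  with assms(4) have "e + 1 \<le> 2 * w" by linarith
  then have "real e + 1 \<le> real (2 * w)" by linarith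
  also have "real (2 * w) \<le> cube_bound v w"
  proof (rule le_cube_boundI)
    have "real (2 * w) ^ 3 = 2 * (4 * real w) * real w ^ 2"
      by (simp add: power3_eq_cube power2_eq_square)
    also have "\<dots> \<le> 2 * real v ^ 2 * real w ^ 2"
      using \<open>4 * real w \<le> real v ^ 2\<close> by (intro mult_right_mono) auto
    finally show "real (2 * w) ^ 3 \<le> 2 * (real v * real w) ^ 2" by (simp add: power_mult_distrib)
  qed simp
  finally show ?thesis .
qed

definition delete_vertex :: "('a \<Rightarrow> 'a \<Rightarrow> bool) \<Rightarrow> 'a \<Rightarrow> 'a \<Rightarrow> 'a \<Rightarrow> bool" where
  "delete_vertex adj z a b \<longleftrightarrow> adj a b \<and> a \<noteq> z \<and> b \<noteq> z"

lemma bipartite_graph_delete_vertex: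
  "bipartite_graph adj V W \<Longrightarrow> bipartite_graph (delete_vertex adj z) (V - {z}) W"
  unfolding bipartite_graph_def delete_vertex_def by blast

lemma num_edges_delete_leaf:
  assumes bip: "bipartite_graph adj V W" and "z \<in> V" "deg adj z = 1"
  shows "num_edges adj = Suc (num_edges (delete_vertex adj z))"
proof -
  obtain y where y: "{t. adj z t} = {y}" using \<open>deg adj z = 1\<close> unfolding deg_def
    by (auto simp: card_1_singleton_iff)
  then have edge: "(z, y) \<in> edge_pairs adj V W"
    using \<open>z \<in> V\<close> bipartite_graphD(3,6)[OF bip] unfolding edge_pairs_def by blast
  have "edge_pairs (delete_vertex adj z) (V - {z}) W = edge_pairs adj V W - {(z, y)}"
    using y \<open>z \<in> V\<close> bipartite_graphD(3)[OF bip] unfolding edge_pairs_def delete_vertex_def by blast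
  then show ?thesis
    unfolding num_edges_eq_card_edge_pairs[OF bip]
      num_edges_eq_card_edge_pairs[OF bipartite_graph_delete_vertex[OF bip]]
    using card_Suc_Diff1[OF finite_edge_pairs[OF bip] edge] by simp
qed

lemma (in C4_C6_free_bipartite) delete_vertex:
  "C4_C6_free_bipartite (delete_vertex adj z) (V - {z}) W"
proof
  show "bipartite_graph (delete_vertex adj z) (V - {z}) W"
    by (rule bipartite_graph_delete_vertex[OF bipartite])
  show "\<not> has_cycle (delete_vertex adj z) 4" "\<not> has_cycle (delete_vertex adj z) 6"
    using no_C4 no_C6 has_cycle_mono[of "delete_vertex adj z" _ adj] unfolding delete_vertex_def
      by blast+
qed

lemma le_cube_bound_if_leaf:
  fixes adj :: "'a \<Rightarrow> 'a \<Rightarrow> bool"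
  assumes IH: "\<And>adj' (V' :: 'a set) W'. card V' + card W' < card V + card W \<Longrightarrow>
      C4_C6_free_bipartite adj' V' W' \<Longrightarrow> cube_regime (card V') (card W') \<Longrightarrow>
      real (num_edges adj') \<le> cube_bound (card V') (card W')"
    and G: "C4_C6_free_bipartite adj V W" and regime: "cube_regime (card V) (card W)"
    and "z \<in> V" "deg adj z = 1"
  shows "real (num_edges adj) \<le> cube_bound (card V) (card W)"
proof -
  interpret C4_C6_free_bipartite adj V W by (rule G)
  have G': "C4_C6_free_bipartite (delete_vertex adj z) (V - {z}) W" by (rule delete_vertex)
  have edges: "num_edges adj = Suc (num_edges (delete_vertex adj z))"
    by (rule num_edges_delete_leaf[OF bipartite \<open>z \<in> V\<close> \<open>deg adj z = 1\<close>])
  have "1 \<le> card V" using \<open>z \<in> V\<close> bipartite_graphD(1)[OF bipartite]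
    by (auto simp: Suc_le_eq card_gt_0_iff)
  have card_V': "card (V - {z}) = card V - 1" using \<open>z \<in> V\<close> bipartite_graphD(1)[OF bipartite]
    by simp
  show ?thesis
  proof (cases "cube_regime (card V - 1) (card W)")
    case True
    have "real (num_edges (delete_vertex adj z)) \<le> cube_bound (card V - 1) (card W)"
      using IH[OF _ G'] True card_V' \<open>1 \<le> card V\<close> by simp
    then show ?thesis using cube_bound_pred_plus_1_le[OF regime \<open>1 \<le> card V\<close>] edges by simp
  next
    case False
    have "4 * num_edges (delete_vertex adj z) \<le> (card V - 1) ^ 2 + 4 * card W"
      using C4_C6_free_bipartite.four_num_edges_le[OF G'] card_V' by simp
    then have "real (num_edges (delete_vertex adj z)) + 1 \<le> cube_bound (card V) (card W)"
      by (rule le_cube_bound_if_not_cube_regime_pred[OF regime False \<open>1 \<le> card V\<close>])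
    then show ?thesis using edges by simp
  qed
qed

theorem num_edges_le_cube_bound:
  fixes adj :: "'a \<Rightarrow> 'a \<Rightarrow> bool"
  shows "C4_C6_free_bipartite adj V W \<Longrightarrow> cube_regime (card V) (card W) \<Longrightarrow>
    real (num_edges adj) \<le> cube_bound (card V) (card W)"
proof (induction "card V + card W" arbitrary: adj V W rule: less_induct)
  case less
  interpret C4_C6_free_bipartite adj V W by (rule less.prems(1))
  consider (leaf_V) z where "z \<in> V" "deg adj z = 1" | (leaf_W) z where "z \<in> W" "deg adj z = 1"
    | (no_leaf) "\<And>z. z \<in> V \<union> W \<Longrightarrow> deg adj z \<noteq> 1"
    by blast
  then show ?case
  proof cases
    case leaf_V
    show ?thesis by (rule le_cube_bound_if_leaf[OF less.hyps less.prems leaf_V]) auto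
  next
    case leaf_W
    have "real (num_edges adj) \<le> cube_bound (card W) (card V)"
    proof (rule le_cube_bound_if_leaf[OF _ commute _ leaf_W])
      show "cube_regime (card W) (card V)" using less.prems(2) cube_regime_commute by blast
    qed (use less.hyps in \<open>auto simp: add.commute\<close>)
    then show ?thesis using cube_bound_commute by simp
  next
    case no_leaf
    show ?thesis by (rule le_cube_boundI) (use num_edges_cube_le_if_no_leaf[OF no_leaf] in auto)
  qed
qed

lemma floor_sq_div_4: "\<lfloor>real m ^ 2 / 4\<rfloor> = int (m ^ 2 div 4)"
  using floor_divide_of_nat_eq[of "m ^ 2" 4] by simp

lemma ceiling_half: "nat \<lceil>real v / 2\<rceil> = (v + 1) div 2"
proof -
  have "\<lceil>real v / 2\<rceil> = int ((v + 1) div 2)"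
    by (rule ceiling_unique) (cases "even v"; auto elim!: evenE oddE simp: field_simps)+
  then show ?thesis by simp
qed

lemma half_times_rest: "((v :: nat) + 1) div 2 * (v - (v + 1) div 2) = v ^ 2 div 4"
proof (cases "even v")
  case True
  then obtain k where "v = 2 * k" by blast
  then show ?thesis by (simp add: power2_eq_square)
next
  case False
  then obtain k where v: "v = 2 * k + 1" by (blast elim: oddE)
  have "(2 * k + 1) ^ 2 div 4 = k * k + k" by (simp add: power2_eq_square algebra_simps)
  then show ?thesis using v by (simp add: algebra_simps)
qed

lemma n_extra_eq:
  assumes "v ^ 2 div 4 < w"
  shows "n_extra v w = w - v ^ 2 div 4"
proof -
  have "\<lceil>real w - real v ^ 2 / 4\<rceil> = - \<lfloor>real v ^ 2 / 4\<rfloor> + int w"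
    using ceiling_add_of_int[of "- (real v ^ 2 / 4)" "int w"] by (simp add: ceiling_minus)
  then show ?thesis unfolding n_extra_def floor_sq_div_4 using assms by simp
qed

lemma cedge_cases:
  assumes "cedge v w g x y"
  obtains (pair) a b where "x = L a \<or> x = L b" "y = P a b"
      "a < (v + 1) div 2" "(v + 1) div 2 \<le> b" "b < v"
    | (extra) k where "x = L (g k)" "y = X k" "k < n_extra v w"
  using assms by (cases x; cases y) (auto simp: ceiling_half)

lemma cadj_commute: "cadj v w g x y \<longleftrightarrow> cadj v w g y x"
  unfolding cadj_def by blast

lemma cadj_L_iff: "cadj v w g (L i) y \<longleftrightarrow> cedge v w g (L i) y"
  unfolding cadj_def by (cases y) auto

lemma common_neighbour_of_L_vertices:
  assumes "cadj v w g (L i) y" "cadj v w g (L j) y" "i \<noteq> j"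
  shows "(y = P i j \<and> i < (v + 1) div 2 \<and> (v + 1) div 2 \<le> j)
    \<or> (y = P j i \<and> j < (v + 1) div 2 \<and> (v + 1) div 2 \<le> i)"
  using assms(1,2) unfolding cadj_L_iff
  by (elim cedge_cases) (use assms(3) in auto)

lemma bipartite_construction:
  assumes "\<forall>k. g k < v"
  shows "bipartite_graph (cadj v w g) (cV v) (cW v w)"
proof -
  have "x \<in> cV v \<and> y \<in> cW v w" if "cedge v w g x y" for x y
    using that assms by (elim cedge_cases) (auto simp: cV_def cW_def ceiling_half)
  moreover have "\<not> cedge v w g x x" for x by (auto elim: cedge_cases)
  moreover have "finite (cW v w)"
  proof -
    have "cW v w \<subseteq> (\<lambda>(a, b). P a b) ` ({..<v} \<times> {..<v}) \<union> X ` {..<n_extra v w}"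
      unfolding cW_def ceiling_half by auto
    then show ?thesis by (rule finite_subset) auto
  qed
  ultimately show ?thesis
    unfolding bipartite_graph_def cadj_def by (auto simp: cV_def cW_def)
qed

lemma construction_no_C4: "\<forall>k. g k < v \<Longrightarrow> \<not> has_cycle (cadj v w g) 4"
proof
  assume "\<forall>k. g k < v" "has_cycle (cadj v w g) 4"
  then obtain x x' y y' where "x \<in> cV v" "x' \<in> cV v" "x \<noteq> x'" "y \<noteq> y'"
    "cadj v w g x y" "cadj v w g x' y" "cadj v w g x y'" "cadj v w g x' y'"
    by (elim bipartite_has_cycle_4E[OF bipartite_construction])
  moreover from this(1-3) obtain i j where "x = L i" "x' = L j" "i \<noteq> j" unfolding cV_def by auto
  ultimately show False
    using common_neighbour_of_L_vertices[of v w g i y j]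
      common_neighbour_of_L_vertices[of v w g i y' j]
    by auto
qed

lemma construction_no_C6: "\<forall>k. g k < v \<Longrightarrow> \<not> has_cycle (cadj v w g) 6"
proof
  assume "\<forall>k. g k < v" "has_cycle (cadj v w g) 6"
  then obtain x1 x2 x3 y1 y2 y3 where "x1 \<in> cV v" "x2 \<in> cV v" "x3 \<in> cV v" "distinct [x1, x2, x3]"
    "cadj v w g x1 y1" "cadj v w g x2 y1" "cadj v w g x2 y2" "cadj v w g x3 y2"
    "cadj v w g x3 y3" "cadj v w g x1 y3"
    by (elim bipartite_has_cycle_6E[OF bipartite_construction])
  then obtain i1 i2 i3 where "x1 = L i1" "x2 = L i2" "x3 = L i3" "distinct [i1, i2, i3]"
    unfolding cV_def by auto
  then show False
    using common_neighbour_of_L_vertices[of v w g i1 y1 i2]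
      common_neighbour_of_L_vertices[of v w g i2 y2 i3]
      common_neighbour_of_L_vertices[of v w g i1 y3 i3] \<open>cadj v w g x1 y1\<close> \<open>cadj v w g x2 y1\<close>
      \<open>cadj v w g x2 y2\<close> \<open>cadj v w g x3 y2\<close> \<open>cadj v w g x3 y3\<close> \<open>cadj v w g x1 y3\<close>
    by auto
qed

lemma cW_eq:
  "cW v w = (\<lambda>(a, b). P a b) ` ({..<(v + 1) div 2} \<times> {(v + 1) div 2..<v}) \<union> X ` {..<n_extra v w}"
  unfolding cW_def ceiling_half by auto

lemma card_cV: "card (cV v) = v"
  unfolding cV_def by (simp add: card_image inj_on_def)

lemma card_cW:
  assumes "v ^ 2 div 4 < w"
  shows "card (cW v w) = w"
proof -
  have "card ((\<lambda>(a, b). P a b) ` ({..<(v + 1) div 2} \<times> {(v + 1) div 2..<v})) = v ^ 2 div 4"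
    unfolding half_times_rest[symmetric] by (subst card_image) (auto simp: inj_on_def)
  moreover have "card (X ` {..<n_extra v w}) = w - v ^ 2 div 4"
    by (simp add: card_image inj_on_def n_extra_eq[OF assms])
  ultimately show ?thesis unfolding cW_eq using assms by (subst card_Un_disjoint) auto
qed

lemma deg_construction_P:
  assumes "a < (v + 1) div 2" "(v + 1) div 2 \<le> b" "b < v"
  shows "deg (cadj v w g) (P a b) = 2"
proof -
  have "{t. cadj v w g (P a b) t} = {L a, L b}"
  proof (intro equalityI subsetI)
    fix t assume "t \<in> {t. cadj v w g (P a b) t}"
    then show "t \<in> {L a, L b}" by (cases t) (auto simp: cadj_def)
  qed (use assms in \<open>auto simp: cadj_def ceiling_half\<close>)
  then show ?thesis using assms unfolding deg_def by simp
qed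

lemma deg_construction_X:
  assumes "k < n_extra v w"
  shows "deg (cadj v w g) (X k) = 1"
proof -
  have "{t. cadj v w g (X k) t} = {L (g k)}"
  proof (intro equalityI subsetI)
    fix t assume "t \<in> {t. cadj v w g (X k) t}"
    then show "t \<in> {L (g k)}" by (cases t) (auto simp: cadj_def)
  qed (use assms in \<open>auto simp: cadj_def\<close>)
  then show ?thesis unfolding deg_def by simp
qed

lemma num_edges_construction:
  assumes "\<forall>k. g k < v" "v ^ 2 div 4 < w"
  shows "num_edges (cadj v w g) = v ^ 2 div 4 + w"
proof -
  define Ps where "Ps = (\<lambda>(a, b). P a b) ` ({..<(v + 1) div 2} \<times> {(v + 1) div 2..<v})"
  have "card Ps + card (X ` {..<n_extra v w}) = w"
    using card_cW[OF assms(2)] unfolding cW_eq Ps_def by (subst (asm) card_Un_disjoint) auto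
  have "num_edges (cadj v w g)
      = (\<Sum>y\<in>Ps. deg (cadj v w g) y) + (\<Sum>y\<in>X ` {..<n_extra v w}. deg (cadj v w g) y)"
    unfolding num_edges_eq_sum_deg[OF bipartite_construction[OF assms(1)]] cW_eq Ps_def
    by (subst sum.union_disjoint) auto
  also have "\<dots> = (\<Sum>y\<in>Ps. 2) + (\<Sum>y\<in>X ` {..<n_extra v w}. 1)"
    by (intro arg_cong2[where f = "(+)"] sum.cong)
      (auto simp: Ps_def deg_construction_P deg_construction_X)
  also have "\<dots> = 2 * card Ps + card (X ` {..<n_extra v w})" by simp
  also have "card Ps = v ^ 2 div 4"
    unfolding Ps_def half_times_rest[symmetric] by (subst card_image) (auto simp: inj_on_def)
  finally show ?thesis using \<open>card Ps + card (X ` {..<n_extra v w}) = w\<close> \<open>card Ps = v ^ 2 div 4\<close>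
    by simp
qed

lemma cube_regime_iff_floor:
  "real (max v w) \<le> of_int \<lfloor>real (min v w) ^ 2 / 4\<rfloor> \<longleftrightarrow> cube_regime v w"
proof -
  have "max v w \<le> min v w ^ 2 div 4 \<longleftrightarrow> 4 * max v w \<le> min v w ^ 2" by presburger
  then show ?thesis unfolding floor_sq_div_4 cube_regime_def by simp
qed

lemma (in C4_C6_free_bipartite) num_edges_le_floor_bound:
  "num_edges adj \<le> min (card V) (card W) ^ 2 div 4 + max (card V) (card W)"
proof -
  have "4 * num_edges adj \<le> min (card V) (card W) ^ 2 + 4 * max (card V) (card W)"
    using four_num_edges_le C4_C6_free_bipartite.four_num_edges_le[OF commute]
    by (cases "card V \<le> card W") (simp_all add: min_def max_def)
  then show ?thesis by presburger
qed

theorem proposition4p10: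
  fixes adj :: "'a \<Rightarrow> 'a \<Rightarrow> bool" and V W :: "'a set"
  assumes "bipartite_graph adj V W"
    and "\<not> has_cycle adj 4" and "\<not> has_cycle adj 6"
  shows "(real (num_edges adj) \<le>
           (if real (max (card V) (card W)) \<le> of_int \<lfloor>real (min (card V) (card W)) ^ 2 / 4\<rfloor>
            then 2 powr (1/3) * (real (card V) * real (card W)) powr (2/3)
            else of_int \<lfloor>real (min (card V) (card W)) ^ 2 / 4\<rfloor> + real (max (card V) (card W)))) \<and>
         (\<forall>v w (g :: nat \<Rightarrow> nat).
           1 \<le> v \<and> v \<le> w \<and> \<not> (real w \<le> of_int \<lfloor>real v ^ 2 / 4\<rfloor>) \<and> (\<forall>k. g k < v) \<longrightarrow>
           bipartite_graph (cadj v w g) (cV v) (cW v w) \<and>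
           card (cV v) = v \<and> card (cW v w) = w \<and>
           \<not> has_cycle (cadj v w g) 4 \<and> \<not> has_cycle (cadj v w g) 6 \<and>
           real (num_edges (cadj v w g)) = of_int \<lfloor>real v ^ 2 / 4\<rfloor> + real w)"
proof -
  interpret C4_C6_free_bipartite adj V W using assms by unfold_locales
  have upper: "real (num_edges adj) \<le> (if cube_regime (card V) (card W)
      then cube_bound (card V) (card W)
      else real (min (card V) (card W) ^ 2 div 4 + max (card V) (card W)))"
    using num_edges_le_cube_bound[OF C4_C6_free_bipartite_axioms] num_edges_le_floor_bound
    by (simp only: of_nat_le_iff split: if_split) blast
  have construction: "bipartite_graph (cadj v w g) (cV v) (cW v w) \<and>
      card (cV v) = v \<and> card (cW v w) = w \<and>
      \<not> has_cycle (cadj v w g) 4 \<and> \<not> has_cycle (cadj v w g) 6 \<and>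
      num_edges (cadj v w g) = v ^ 2 div 4 + w"
    if "\<forall>k. g k < v" "v ^ 2 div 4 < w" for v w g
    using bipartite_construction card_cV card_cW construction_no_C4 construction_no_C6
      num_edges_construction that by simp
  show ?thesis
    unfolding cube_regime_iff_floor unfolding cube_bound_def[symmetric] floor_sq_div_4
    using upper construction by auto
qed

end
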